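(* Let $(X,d)$ be a metric space with $|X|\geqslant 3$ in which every point is an accumulation point, and let $T\colon X\to X$ be a continuous generalized Ćirić–Reich–Rus type mapping with constants $\alpha,\lambda\geqslant 0$, $2\alpha+\frac{3\lambda}{2}<1$, i.e. $$d(Tx,Ty)+d(Ty,Tz)+d(Tx,Tz)\leqslant \alpha\big(d(x,y)+d(y,z)+d(z,x)\big)+\lambda\big(d(x,Tx)+d(y,Ty)+d(z,Tz)\big)$$ for all pairwise distinct $x,y,z\in X$. Then $T$ is a Ćirić–Reich–Rus type mapping with $b=c$, i.e. there exist $a,b\geqslant 0$ with $a+2b<1$ such that $$d(Tx,Ty)\leqslant a\,d(x,y)+b\,d(x,Tx)+b\,d(y,Ty)\quad\text{for all } x,y\in X.$$ *)

theory Defs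
  imports "HOL-Analysis.Analysis"
begin

end

theory Submission
  imports Defs
begin

(* Letting z tend to x in the three-point inequality, which is possible because x is an
   accumulation point and T is continuous, gives
     2 d(Tx,Ty) <= 2 alpha d(x,y) + lam (2 d(x,Tx) + d(y,Ty))   for x ~= y.
   Adding this to the same inequality with x and y exchanged yields the claim with
   a = alpha and b = 3 lam / 4. *)

lemma isCont_le_at_limpt:
  fixes f g :: "'a::t2_space \<Rightarrow> 'b::linorder_topology"
  assumes "x islimpt UNIV" and "isCont f x" and "isCont g x"
    and "\<forall>\<^sub>F z in at x. f z \<le> g z"
  shows "f x \<le> g x"
  using tendsto_le[of "at x" g "g x" f "f x"] assms
  by (simp add: isCont_def trivial_limit_within)

lemma gcrr_two_point_bound:
  fixes T :: "'a::metric_space \<Rightarrow> 'a" and \<alpha> lam :: real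
  assumes accum: "\<And>x::'a. x islimpt UNIV"
    and cont: "continuous_on UNIV T"
    and gcrr: "\<And>x y z. x \<noteq> y \<Longrightarrow> y \<noteq> z \<Longrightarrow> x \<noteq> z \<Longrightarrow>
        dist (T x) (T y) + dist (T y) (T z) + dist (T x) (T z)
        \<le> \<alpha> * (dist x y + dist y z + dist z x)
           + lam * (dist x (T x) + dist y (T y) + dist z (T z))"
    and "x \<noteq> y"
  shows "2 * dist (T x) (T y) \<le> 2 * \<alpha> * dist x y + lam * (2 * dist x (T x) + dist y (T y))"
proof -
  let ?lhs = "\<lambda>z. dist (T x) (T y) + dist (T y) (T z) + dist (T x) (T z)"
  let ?rhs = "\<lambda>z. \<alpha> * (dist x y + dist y z + dist z x)
                  + lam * (dist x (T x) + dist y (T y) + dist z (T z))"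
  have "?lhs x \<le> ?rhs x"
  proof (rule isCont_le_at_limpt[where f = ?lhs and g = ?rhs, OF accum])
    have "isCont T x"
      using cont by (simp add: continuous_on_eq_continuous_at)
    then show "isCont ?lhs x" and "isCont ?rhs x"
      by (auto intro!: continuous_intros)
    have "\<forall>\<^sub>F z in at x. z \<noteq> y"
      by (rule eventually_neq_at_within)
    moreover have "\<forall>\<^sub>F z in at x. z \<noteq> x"
      by (simp add: eventually_at_filter)
    ultimately show "\<forall>\<^sub>F z in at x. ?lhs z \<le> ?rhs z"
      by eventually_elim (use \<open>x \<noteq> y\<close> gcrr in auto)
  qed
  then show ?thesis
    by (simp add: dist_commute algebra_simps)
qed

theorem corollary2p6:
  fixes T :: "'a::metric_space \<Rightarrow> 'a" and \<alpha> lam :: real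
  assumes three: "\<exists>x y z::'a. x \<noteq> y \<and> y \<noteq> z \<and> x \<noteq> z"
    and accum: "\<And>x::'a. x islimpt UNIV"
    and cont: "continuous_on UNIV T"
    and alpha_nonneg: "\<alpha> \<ge> 0" and lambda_nonneg: "lam \<ge> 0"
    and small: "2 * \<alpha> + 3 * lam / 2 < 1"
    and gcrr: "\<And>x y z. x \<noteq> y \<Longrightarrow> y \<noteq> z \<Longrightarrow> x \<noteq> z \<Longrightarrow>
        dist (T x) (T y) + dist (T y) (T z) + dist (T x) (T z)
        \<le> \<alpha> * (dist x y + dist y z + dist z x)
           + lam * (dist x (T x) + dist y (T y) + dist z (T z))"
  shows "\<exists>a b::real. a \<ge> 0 \<and> b \<ge> 0 \<and> a + 2 * b < 1 \<and>
           (\<forall>x y. dist (T x) (T y) \<le> a * dist x y + b * dist x (T x) + b * dist y (T y))"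
proof (intro exI conjI allI)
  show "\<alpha> \<ge> 0" "3 * lam / 4 \<ge> 0" "\<alpha> + 2 * (3 * lam / 4) < 1"
    using alpha_nonneg lambda_nonneg small by auto
  fix x y
  show "dist (T x) (T y) \<le> \<alpha> * dist x y + 3 * lam / 4 * dist x (T x) + 3 * lam / 4 * dist y (T y)"
  proof (cases "x = y")
    case True
    then show ?thesis
      using alpha_nonneg lambda_nonneg by simp
  next
    case False
    have "2 * dist (T x) (T y) \<le> 2 * \<alpha> * dist x y + lam * (2 * dist x (T x) + dist y (T y))"
      "2 * dist (T y) (T x) \<le> 2 * \<alpha> * dist y x + lam * (2 * dist y (T y) + dist x (T x))"
      using gcrr_two_point_bound[OF accum cont gcrr] False by auto
    then show ?thesis
      by (simp add: dist_commute algebra_simps)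
  qed
qed

end
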